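(* Let $S$ be a finite $p$-group and $\mathcal{A}$ a divisible $S$-algebra. Then $\mathcal{A}$ has all twisted units if and only if, for all isomorphisms $\varphi:P\to Q$ and $\psi:Q\to R$ of $\mathfrak{F}_S(\mathcal{A})$, every element of $\mathcal{A}(\psi\varphi)$ is of the form $xy$ with $x\in\mathcal{A}(\psi)$ and $y\in\mathcal{A}(\varphi)$ (i.e. the multiplication pairing $\mathcal{A}(\psi)\times\mathcal{A}(\varphi)\to\mathcal{A}(\psi\varphi)$ is surjective).
   Context: $\mathcal{O}$ is a complete local noetherian domain with maximal ideal $\mathfrak{m}$ and algebraically closed residue field of characteristic $p$. An interior $S$-algebra is an $\mathcal{O}$-free finite-rank $\mathcal{O}$-algebra $\mathcal{A}$ with group homomorphism $S\to\mathcal{A}^\times$; $S\times S$ acts by $(s,t)a=sat^{-1}$; it is bifree if it has an $\mathcal{O}$-basis $Y$ with $sY=Y=Ys$ ($s\in S$) on which left and right actions are free. For $P\le S$ and injective $\varphi:P\to S$, ${}^\varphi\mathcal{A}^P=\{a:\varphi(p)a=ap\ \forall p\}$ is the fixed points of $\Delta(\varphi,P)=\{(\varphi(p),p)\}$, and $\mathcal{A}(\varphi)=\mathcal{A}^{\Delta}/(\mathfrak{m}\mathcal{A}^\Delta+\sum_{V<\Delta}\mathrm{tr}_V^\Delta\mathcal{A}^V)$ with $\Delta=\Delta(\varphi,P)$ and quotient map $\mathrm{br}_\varphi$; $\mathcal{A}(P)=\mathcal{A}(\iota_P)$. Multiplication induces $\mathcal{A}(\psi)\times\mathcal{A}(\varphi)\to\mathcal{A}(\psi\varphi)$,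 $\mathrm{br}_\psi(a)\mathrm{br}_\varphi(c)=\mathrm{br}_{\psi\varphi}(ac)$. $\mathfrak{F}_S(\mathcal{A})$: objects subgroups of $S$, $\mathrm{Hom}(P,Q)=\{\varphi:P\to Q$ injective$:\mathcal{A}(\varphi)\ne0\}$. $\mathcal{A}$ is divisible if it is bifree and $\mathfrak{F}_S(\mathcal{A})$ contains all inclusions, is closed under composition, and every morphism is an inclusion composed with an isomorphism of $\mathfrak{F}_S(\mathcal{A})$. For an isomorphism $\varphi:P\to Q$ of $\mathfrak{F}_S(\mathcal{A})$, a twisted unit of $\varphi$ is $u\in\mathcal{A}(\varphi)$ such that some $u^\dagger\in\mathcal{A}(\varphi^{-1})$ satisfies $u^\dagger u=1_{\mathcal{A}(P)}$; $\mathcal{A}$ has all twisted units if every isomorphism of $\mathfrak{F}_S(\mathcal{A})$ has a twisted unit. *)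

theory Defs
  imports "HOL-Algebra.Algebra"
begin

definition ideal_power :: "('o, 'b) ring_scheme \<Rightarrow> 'o set \<Rightarrow> nat \<Rightarrow> 'o set" where
  "ideal_power R m n = ((\<lambda>J. ideal_prod R m J) ^^ n) (carrier R)"

definition madic_complete :: "('o, 'b) ring_scheme \<Rightarrow> 'o set \<Rightarrow> bool" where
  "madic_complete R m \<longleftrightarrow>
     (\<forall>x :: nat \<Rightarrow> 'o. range x \<subseteq> carrier R \<and>
        (\<forall>k. \<exists>N. \<forall>i\<ge>N. \<forall>j\<ge>N. x i \<ominus>\<^bsub>R\<^esub> x j \<in> ideal_power R m k)
        \<longrightarrow> (\<exists>l\<in>carrier R. \<forall>k. \<exists>N. \<forall>i\<ge>N. x i \<ominus>\<^bsub>R\<^esub> l \<in> ideal_power R m k))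
   \<and> (\<Inter>k. ideal_power R m k) = {\<zero>\<^bsub>R\<^esub>}"

definition standing_ring :: "('o, 'b) ring_scheme \<Rightarrow> 'o set \<Rightarrow> nat \<Rightarrow> bool" where
  "standing_ring R m p \<longleftrightarrow>
     noetherian_domain R \<and> maximalideal m R \<and> (\<forall>I. maximalideal I R \<longrightarrow> I = m)
     \<and> madic_complete R m
     \<and> algebraically_closed (R Quot m)
     \<and> Factorial_Ring.prime p \<and> add_pow (R Quot m) p \<one>\<^bsub>R Quot m\<^esub> = \<zero>\<^bsub>R Quot m\<^esub>"

definition p_group :: "('g, 'c) monoid_scheme \<Rightarrow> nat \<Rightarrow> bool" where
  "p_group G p \<longleftrightarrow> group G \<and> finite (carrier G) \<and> (\<exists>n. card (carrier G) = p ^ n)"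

definition free_basis ::
  "('o, 'b) ring_scheme \<Rightarrow> ('a, 'd) ring_scheme \<Rightarrow> ('o \<Rightarrow> 'a) \<Rightarrow> 'a set \<Rightarrow> bool" where
  "free_basis R A alg Y \<longleftrightarrow> finite Y \<and> Y \<subseteq> carrier A \<and>
     (\<forall>a\<in>carrier A. \<exists>f\<in>Y \<rightarrow> carrier R. a = finsum A (\<lambda>y. alg (f y) \<otimes>\<^bsub>A\<^esub> y) Y) \<and>
     (\<forall>f\<in>Y \<rightarrow> carrier R. finsum A (\<lambda>y. alg (f y) \<otimes>\<^bsub>A\<^esub> y) Y = \<zero>\<^bsub>A\<^esub>
         \<longrightarrow> (\<forall>y\<in>Y. f y = \<zero>\<^bsub>R\<^esub>))"

definition interior_algebra ::
  "('o, 'b) ring_scheme \<Rightarrow> ('a, 'd) ring_scheme \<Rightarrow> ('o \<Rightarrow> 'a)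
   \<Rightarrow> ('g, 'c) monoid_scheme \<Rightarrow> ('g \<Rightarrow> 'a) \<Rightarrow> bool" where
  "interior_algebra R A alg G \<sigma> \<longleftrightarrow>
     ring A \<and> alg \<in> ring_hom R A \<and>
     (\<forall>c\<in>carrier R. \<forall>a\<in>carrier A. alg c \<otimes>\<^bsub>A\<^esub> a = a \<otimes>\<^bsub>A\<^esub> alg c) \<and>
     (\<exists>Y. free_basis R A alg Y) \<and>
     group G \<and> \<sigma> \<in> hom G (units_of A)"

definition bifree ::
  "('o, 'b) ring_scheme \<Rightarrow> ('a, 'd) ring_scheme \<Rightarrow> ('o \<Rightarrow> 'a)
   \<Rightarrow> ('g, 'c) monoid_scheme \<Rightarrow> ('g \<Rightarrow> 'a) \<Rightarrow> bool" where
  "bifree R A alg G \<sigma> \<longleftrightarrow> interior_algebra R A alg G \<sigma> \<and>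
     (\<exists>Y. free_basis R A alg Y \<and>
        (\<forall>s\<in>carrier G. (\<lambda>y. \<sigma> s \<otimes>\<^bsub>A\<^esub> y) ` Y = Y \<and> (\<lambda>y. y \<otimes>\<^bsub>A\<^esub> \<sigma> s) ` Y = Y) \<and>
        (\<forall>s\<in>carrier G. \<forall>y\<in>Y. \<sigma> s \<otimes>\<^bsub>A\<^esub> y = y \<longrightarrow> s = \<one>\<^bsub>G\<^esub>) \<and>
        (\<forall>s\<in>carrier G. \<forall>y\<in>Y. y \<otimes>\<^bsub>A\<^esub> \<sigma> s = y \<longrightarrow> s = \<one>\<^bsub>G\<^esub>))"

definition act :: "('a, 'd) ring_scheme \<Rightarrow> ('g, 'c) monoid_scheme \<Rightarrow> ('g \<Rightarrow> 'a)
   \<Rightarrow> 'g \<times> 'g \<Rightarrow> 'a \<Rightarrow> 'a" where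
  "act A G \<sigma> st a = \<sigma> (fst st) \<otimes>\<^bsub>A\<^esub> a \<otimes>\<^bsub>A\<^esub> \<sigma> (inv\<^bsub>G\<^esub> (snd st))"

definition Delta :: "('g \<Rightarrow> 'g) \<Rightarrow> 'g set \<Rightarrow> ('g \<times> 'g) set" where
  "Delta \<phi> P = {(\<phi> x, x) | x. x \<in> P}"

definition fixpts :: "('a, 'd) ring_scheme \<Rightarrow> ('g, 'c) monoid_scheme \<Rightarrow> ('g \<Rightarrow> 'a)
   \<Rightarrow> ('g \<times> 'g) set \<Rightarrow> 'a set" where
  "fixpts A G \<sigma> V = {a \<in> carrier A. \<forall>g\<in>V. act A G \<sigma> g a = a}"

text \<open>Relative trace tr_V^D(a) = sum over the left cosets gV of V in D of g a
  (independent of the choice of representatives for a in A^V).\<close>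
definition trace :: "('a, 'd) ring_scheme \<Rightarrow> ('g, 'c) monoid_scheme \<Rightarrow> ('g \<Rightarrow> 'a)
   \<Rightarrow> ('g \<times> 'g) set \<Rightarrow> ('g \<times> 'g) set \<Rightarrow> 'a \<Rightarrow> 'a" where
  "trace A G \<sigma> D V a =
     finsum A (\<lambda>C. act A G \<sigma> (SOME g. g \<in> C) a) {l_coset (G \<times>\<times> G) g V | g. g \<in> D}"

text \<open>The kernel of the Brauer map br_D : A^D \<rightarrow> A(D), i.e. the submodule
  m A^D + sum_{V < D} tr_V^D(A^V).\<close>
inductive_set brker :: "'o set \<Rightarrow> ('a, 'd) ring_scheme \<Rightarrow> ('o \<Rightarrow> 'a)
   \<Rightarrow> ('g, 'c) monoid_scheme \<Rightarrow> ('g \<Rightarrow> 'a) \<Rightarrow> ('g \<times> 'g) set \<Rightarrow> 'a set"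
  for m A alg G \<sigma> D where
  zero: "\<zero>\<^bsub>A\<^esub> \<in> brker m A alg G \<sigma> D"
| mgen: "c \<in> m \<Longrightarrow> a \<in> fixpts A G \<sigma> D \<Longrightarrow> alg c \<otimes>\<^bsub>A\<^esub> a \<in> brker m A alg G \<sigma> D"
| trgen: "subgroup V (G \<times>\<times> G) \<Longrightarrow> V \<subset> D \<Longrightarrow> a \<in> fixpts A G \<sigma> V
           \<Longrightarrow> trace A G \<sigma> D V a \<in> brker m A alg G \<sigma> D"
| add: "x \<in> brker m A alg G \<sigma> D \<Longrightarrow> y \<in> brker m A alg G \<sigma> D
           \<Longrightarrow> x \<oplus>\<^bsub>A\<^esub> y \<in> brker m A alg G \<sigma> D"
| neg: "x \<in> brker m A alg G \<sigma> D \<Longrightarrow> \<ominus>\<^bsub>A\<^esub> x \<in> brker m A alg G \<sigma> D"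

text \<open>A(phi) \<noteq> 0 for phi : P \<rightarrow> S.\<close>
definition brauer_nonzero :: "'o set \<Rightarrow> ('a, 'd) ring_scheme \<Rightarrow> ('o \<Rightarrow> 'a)
   \<Rightarrow> ('g, 'c) monoid_scheme \<Rightarrow> ('g \<Rightarrow> 'a) \<Rightarrow> ('g \<Rightarrow> 'g) \<Rightarrow> 'g set \<Rightarrow> bool" where
  "brauer_nonzero m A alg G \<sigma> \<phi> P \<longleftrightarrow>
     \<not> fixpts A G \<sigma> (Delta \<phi> P) \<subseteq> brker m A alg G \<sigma> (Delta \<phi> P)"

definition F_hom :: "'o set \<Rightarrow> ('a, 'd) ring_scheme \<Rightarrow> ('o \<Rightarrow> 'a)
   \<Rightarrow> ('g, 'c) monoid_scheme \<Rightarrow> ('g \<Rightarrow> 'a) \<Rightarrow> 'g set \<Rightarrow> 'g set \<Rightarrow> ('g \<Rightarrow> 'g) \<Rightarrow> bool" where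
  "F_hom m A alg G \<sigma> P Q \<phi> \<longleftrightarrow>
     subgroup P G \<and> subgroup Q G \<and>
     \<phi> \<in> hom (G\<lparr>carrier := P\<rparr>) (G\<lparr>carrier := Q\<rparr>) \<and> inj_on \<phi> P \<and>
     brauer_nonzero m A alg G \<sigma> \<phi> P"

definition F_iso :: "'o set \<Rightarrow> ('a, 'd) ring_scheme \<Rightarrow> ('o \<Rightarrow> 'a)
   \<Rightarrow> ('g, 'c) monoid_scheme \<Rightarrow> ('g \<Rightarrow> 'a) \<Rightarrow> 'g set \<Rightarrow> 'g set \<Rightarrow> ('g \<Rightarrow> 'g) \<Rightarrow> bool" where
  "F_iso m A alg G \<sigma> P Q \<phi> \<longleftrightarrow>
     F_hom m A alg G \<sigma> P Q \<phi> \<and>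
     (\<exists>\<chi>. F_hom m A alg G \<sigma> Q P \<chi> \<and> (\<forall>x\<in>P. \<chi> (\<phi> x) = x) \<and> (\<forall>y\<in>Q. \<phi> (\<chi> y) = y))"

definition divisible ::
  "('o, 'b) ring_scheme \<Rightarrow> 'o set \<Rightarrow> ('a, 'd) ring_scheme \<Rightarrow> ('o \<Rightarrow> 'a)
   \<Rightarrow> ('g, 'c) monoid_scheme \<Rightarrow> ('g \<Rightarrow> 'a) \<Rightarrow> bool" where
  "divisible R m A alg G \<sigma> \<longleftrightarrow>
     bifree R A alg G \<sigma> \<and>
     (\<forall>P Q. subgroup P G \<and> subgroup Q G \<and> P \<subseteq> Q \<longrightarrow> F_hom m A alg G \<sigma> P Q (\<lambda>x. x)) \<and>
     (\<forall>P Q T \<phi> \<psi>. F_hom m A alg G \<sigma> P Q \<phi> \<and> F_hom m A alg G \<sigma> Q T \<psi>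
          \<longrightarrow> F_hom m A alg G \<sigma> P T (\<psi> \<circ> \<phi>)) \<and>
     (\<forall>P Q \<phi>. F_hom m A alg G \<sigma> P Q \<phi> \<longrightarrow>
          (\<exists>P' \<alpha>. F_iso m A alg G \<sigma> P P' \<alpha> \<and> P' \<subseteq> Q \<and> (\<forall>x\<in>P. \<phi> x = \<alpha> x)))"

text \<open>u (a representative in A^Delta(phi,P)) is a twisted unit of the isomorphism
  phi : P \<rightarrow> Q: some u' in A(phi^-1) has u' u = 1 in A(P).\<close>
definition twisted_unit :: "'o set \<Rightarrow> ('a, 'd) ring_scheme \<Rightarrow> ('o \<Rightarrow> 'a)
   \<Rightarrow> ('g, 'c) monoid_scheme \<Rightarrow> ('g \<Rightarrow> 'a) \<Rightarrow> 'g set \<Rightarrow> 'g set \<Rightarrow> ('g \<Rightarrow> 'g) \<Rightarrow> 'a \<Rightarrow> bool" where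
  "twisted_unit m A alg G \<sigma> P Q \<phi> u \<longleftrightarrow>
     u \<in> fixpts A G \<sigma> (Delta \<phi> P) \<and>
     (\<exists>u' \<in> fixpts A G \<sigma> (Delta (inv_into P \<phi>) Q).
        u' \<otimes>\<^bsub>A\<^esub> u \<ominus>\<^bsub>A\<^esub> \<one>\<^bsub>A\<^esub> \<in> brker m A alg G \<sigma> (Delta (\<lambda>x. x) P))"

definition all_twisted_units :: "'o set \<Rightarrow> ('a, 'd) ring_scheme \<Rightarrow> ('o \<Rightarrow> 'a)
   \<Rightarrow> ('g, 'c) monoid_scheme \<Rightarrow> ('g \<Rightarrow> 'a) \<Rightarrow> bool" where
  "all_twisted_units m A alg G \<sigma> \<longleftrightarrow>
     (\<forall>P Q \<phi>. F_iso m A alg G \<sigma> P Q \<phi> \<longrightarrow> (\<exists>u. twisted_unit m A alg G \<sigma> P Q \<phi> u))"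

end

theory Submission
  imports Defs
begin

text \<open>
  For z in A^Delta(f,P), left multiplication by z sends A^V to A^V' for every V \<le> Delta(P),
  where V' is the image of V under Delta_map f : (q, q) \<mapsto> (f q, q), and it commutes with
  relative traces: z tr_V^Delta(P)(a) = tr_V'^Delta(f,P)(z a). Hence it maps the kernel of
  br_P into the kernel of br_f. So if u is a twisted unit of \<phi> with u' u = 1 in A(P),
  every z in A(\<psi>\<phi>) equals (z u') u in A(\<psi>\<phi>), where z u' lies in A(\<psi>).
  Conversely, writing 1 in A(\<phi>\<inverse>\<phi>) = A(P) as a product x y with x in A(\<phi>\<inverse>) exhibits y as
  a twisted unit of \<phi>.
\<close>

section \<open>Twisted diagonal subgroups\<close>

lemma Delta_cong: "(\<And>x. x \<in> P \<Longrightarrow> f x = g x) \<Longrightarrow> Delta f P = Delta g P"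
  by (force simp: Delta_def)

lemma Delta_eq_image: "Delta f P = (\<lambda>x. (f x, x)) ` P"
  by (auto simp: Delta_def)

lemma fixpts_closed: "a \<in> fixpts A G \<sigma> V \<Longrightarrow> a \<in> carrier A"
  by (simp add: fixpts_def)

lemma subgroup_Delta:
  assumes "group G" "subgroup P G" "f \<in> hom (G\<lparr>carrier := P\<rparr>) G"
  shows "subgroup (Delta f P) (G \<times>\<times> G)"
proof -
  have "(\<lambda>x. (f x, x)) \<in> hom (G\<lparr>carrier := P\<rparr>) (G \<times>\<times> G)"
    using assms(3) subgroup.subset[OF assms(2)] by (auto simp: hom_def)
  then have "group_hom (G\<lparr>carrier := P\<rparr>) (G \<times>\<times> G) (\<lambda>x. (f x, x))"
    using assms by (simp add: group_hom_def group_hom_axioms_def subgroup.subgroup_is_group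
        DirProd_group)
  then show ?thesis
    unfolding Delta_eq_image using group_hom.img_is_subgroup by fastforce
qed

lemma image_l_coset:
  assumes "h \<in> hom (G\<lparr>carrier := D\<rparr>) H" "g \<in> D" "V \<subseteq> D"
  shows "h ` l_coset G g V = l_coset H (h g) (h ` V)"
proof -
  have "h (g \<otimes>\<^bsub>G\<^esub> v) = h g \<otimes>\<^bsub>H\<^esub> h v" if "v \<in> V" for v
    using assms that hom_mult[OF assms(1), of g v] by auto
  then have "(\<Union>v\<in>V. {h (g \<otimes>\<^bsub>G\<^esub> v)}) = (\<Union>v\<in>V. {h g \<otimes>\<^bsub>H\<^esub> h v})"
    by simp
  then show ?thesis
    by (simp add: l_coset_def image_UN)
qed

definition Delta_map :: "('g \<Rightarrow> 'g) \<Rightarrow> 'g \<times> 'g \<Rightarrow> 'g \<times> 'g" where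
  "Delta_map f c = (f (snd c), snd c)"

lemma image_Delta_map_Delta: "Delta_map f ` Delta g P = Delta f P"
  by (force simp: Delta_def Delta_map_def)

lemma inj_on_Delta_map: "inj_on (Delta_map f) (Delta g P)"
  by (auto simp: inj_on_def Delta_def Delta_map_def)

lemma image_Delta_map_psubset:
  assumes "V \<subset> Delta g P"
  shows "Delta_map f ` V \<subset> Delta f P"
proof -
  have "Delta_map f ` V \<noteq> Delta_map f ` Delta g P"
    using assms inj_on_image_eq_iff[OF inj_on_Delta_map[of f g P]] by blast
  moreover have "Delta_map f ` V \<subseteq> Delta_map f ` Delta g P"
    using assms by blast
  ultimately show ?thesis
    by (simp add: image_Delta_map_Delta psubset_eq)
qed

lemma Delta_map_hom:
  assumes "P \<subseteq> carrier G" "f \<in> hom (G\<lparr>carrier := P\<rparr>) G" "V \<subseteq> Delta (\<lambda>x. x) P"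
  shows "Delta_map f \<in> hom ((G \<times>\<times> G)\<lparr>carrier := V\<rparr>) (G \<times>\<times> G)"
  using assms by (fastforce simp: hom_def Delta_def Delta_map_def)

lemma l_cosets_image_Delta_map:
  assumes "P \<subseteq> carrier G" "f \<in> hom (G\<lparr>carrier := P\<rparr>) G" "V \<subseteq> Delta (\<lambda>x. x) P"
  shows "{l_coset (G \<times>\<times> G) g (Delta_map f ` V) | g. g \<in> Delta f P}
       = (\<lambda>C. Delta_map f ` C) ` {l_coset (G \<times>\<times> G) g V | g. g \<in> Delta (\<lambda>x. x) P}"
proof -
  have "(\<lambda>g. l_coset (G \<times>\<times> G) (Delta_map f g) (Delta_map f ` V)) ` Delta (\<lambda>x. x) P
      = (\<lambda>g. Delta_map f ` l_coset (G \<times>\<times> G) g V) ` Delta (\<lambda>x. x) P"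
    using image_l_coset[OF Delta_map_hom[OF assms(1,2) subset_refl] _ assms(3)]
    by (intro image_cong) simp_all
  then show ?thesis
    unfolding Setcompr_eq_image image_Delta_map_Delta[of f "\<lambda>x. x" P, symmetric] image_image .
qed

lemma inj_on_image_Delta_map_l_cosets:
  assumes "group G" "subgroup P G" "V \<subseteq> Delta (\<lambda>x. x) P"
  shows "inj_on (\<lambda>C. Delta_map f ` C) {l_coset (G \<times>\<times> G) g V | g. g \<in> Delta (\<lambda>x. x) P}"
proof (rule inj_onI)
  fix C C'
  assume C: "C \<in> {l_coset (G \<times>\<times> G) g V | g. g \<in> Delta (\<lambda>x. x) P}"
    "C' \<in> {l_coset (G \<times>\<times> G) g V | g. g \<in> Delta (\<lambda>x. x) P}"
    and eq: "Delta_map f ` C = Delta_map f ` C'"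
  have D: "subgroup (Delta (\<lambda>x. x) P) (G \<times>\<times> G)"
    using assms(1,2) subgroup.subset[OF assms(2)] by (intro subgroup_Delta) (auto simp: hom_def)
  have "l_coset (G \<times>\<times> G) g V \<subseteq> Delta (\<lambda>x. x) P" if "g \<in> Delta (\<lambda>x. x) P" for g
    using that assms(3) subgroup.m_closed[OF D] unfolding l_coset_def by blast
  then have "C \<subseteq> Delta (\<lambda>x. x) P" "C' \<subseteq> Delta (\<lambda>x. x) P"
    using C by blast+
  then show "C = C'"
    using inj_on_image_eq_iff[OF inj_on_Delta_map] eq by blast
qed

section \<open>Fixed points and relative traces\<close>

locale interior_action =
  fixes A :: "('a, 'd) ring_scheme" and G :: "('g, 'c) monoid_scheme" and \<sigma> :: "'g \<Rightarrow> 'a"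
  assumes ring: "ring A" and group: "group G" and \<sigma>_hom: "\<sigma> \<in> hom G (units_of A)"
begin

sublocale A: ring A by (rule ring)
sublocale G: group G by (rule group)
sublocale GG: group "G \<times>\<times> G" by (rule DirProd_group[OF group group])

lemma \<sigma>_Units: "s \<in> carrier G \<Longrightarrow> \<sigma> s \<in> Units A"
  using \<sigma>_hom by (auto simp: hom_def units_of_carrier)

lemma \<sigma>_closed [simp]: "s \<in> carrier G \<Longrightarrow> \<sigma> s \<in> carrier A"
  using \<sigma>_Units by blast

lemma \<sigma>_mult: "s \<in> carrier G \<Longrightarrow> t \<in> carrier G \<Longrightarrow> \<sigma> (s \<otimes>\<^bsub>G\<^esub> t) = \<sigma> s \<otimes>\<^bsub>A\<^esub> \<sigma> t"
  using \<sigma>_hom by (auto simp: hom_def units_of_mult)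

lemma \<sigma>_one: "\<sigma> \<one>\<^bsub>G\<^esub> = \<one>\<^bsub>A\<^esub>"
proof -
  have "group_hom G (units_of A) \<sigma>"
    using \<sigma>_hom A.units_group by (simp add: group_hom_def group_hom_axioms_def group)
  then show ?thesis
    using group_hom.hom_one by (fastforce simp: units_of_one)
qed

lemma \<sigma>_inv_mult: "s \<in> carrier G \<Longrightarrow> \<sigma> (inv\<^bsub>G\<^esub> s) \<otimes>\<^bsub>A\<^esub> \<sigma> s = \<one>\<^bsub>A\<^esub>"
  by (metis G.l_inv G.inv_closed \<sigma>_mult \<sigma>_one)

lemma \<sigma>_mult_inv: "s \<in> carrier G \<Longrightarrow> \<sigma> s \<otimes>\<^bsub>A\<^esub> \<sigma> (inv\<^bsub>G\<^esub> s) = \<one>\<^bsub>A\<^esub>"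
  by (metis G.r_inv G.inv_closed \<sigma>_mult \<sigma>_one)

lemma act_closed [simp]:
  "st \<in> carrier (G \<times>\<times> G) \<Longrightarrow> a \<in> carrier A \<Longrightarrow> act A G \<sigma> st a \<in> carrier A"
  by (auto simp: act_def)

lemma act_mult:
  assumes "st \<in> carrier (G \<times>\<times> G)" "st' \<in> carrier (G \<times>\<times> G)" "a \<in> carrier A"
  shows "act A G \<sigma> (st \<otimes>\<^bsub>G \<times>\<times> G\<^esub> st') a = act A G \<sigma> st (act A G \<sigma> st' a)"
  using assms by (auto simp: act_def mult_DirProd' \<sigma>_mult G.inv_mult_group A.m_assoc)

lemma act_mult_fixed:
  assumes "s \<in> carrier G" "t \<in> carrier G" "u \<in> carrier G" "a \<in> carrier A" "z \<in> carrier A"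
    and "act A G \<sigma> (s, t) z = z"
  shows "act A G \<sigma> (s, u) (z \<otimes>\<^bsub>A\<^esub> a) = z \<otimes>\<^bsub>A\<^esub> act A G \<sigma> (t, u) a"
proof -
  have "z \<otimes>\<^bsub>A\<^esub> act A G \<sigma> (t, u) a
      = (\<sigma> s \<otimes>\<^bsub>A\<^esub> z \<otimes>\<^bsub>A\<^esub> \<sigma> (inv\<^bsub>G\<^esub> t)) \<otimes>\<^bsub>A\<^esub> (\<sigma> t \<otimes>\<^bsub>A\<^esub> a \<otimes>\<^bsub>A\<^esub> \<sigma> (inv\<^bsub>G\<^esub> u))"
    using assms(6) by (simp add: act_def)
  also have "\<dots> = \<sigma> s \<otimes>\<^bsub>A\<^esub> z \<otimes>\<^bsub>A\<^esub> (\<sigma> (inv\<^bsub>G\<^esub> t) \<otimes>\<^bsub>A\<^esub> \<sigma> t) \<otimes>\<^bsub>A\<^esub> a \<otimes>\<^bsub>A\<^esub> \<sigma> (inv\<^bsub>G\<^esub> u)"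
    using assms by (simp add: A.m_assoc)
  also have "\<dots> = act A G \<sigma> (s, u) (z \<otimes>\<^bsub>A\<^esub> a)"
    using assms by (simp add: \<sigma>_inv_mult act_def A.m_assoc)
  finally show ?thesis by simp
qed

lemma act_l_coset:
  assumes "subgroup V (G \<times>\<times> G)" "a \<in> fixpts A G \<sigma> V" "g \<in> carrier (G \<times>\<times> G)"
    and "c \<in> l_coset (G \<times>\<times> G) g V"
  shows "act A G \<sigma> c a = act A G \<sigma> g a"
proof -
  obtain v where "v \<in> V" and c: "c = g \<otimes>\<^bsub>G \<times>\<times> G\<^esub> v"
    using assms(4) by (auto simp: l_coset_def)
  then show ?thesis
    using assms(1-3) act_mult[of g v a] subgroup.mem_carrier by (fastforce simp: fixpts_def)
qed

lemma act_some_l_coset: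
  assumes "subgroup V (G \<times>\<times> G)" "a \<in> fixpts A G \<sigma> V" "g \<in> carrier (G \<times>\<times> G)"
  shows "act A G \<sigma> (SOME c. c \<in> l_coset (G \<times>\<times> G) g V) a = act A G \<sigma> g a"
  using assms GG.lcos_self[OF assms(3,1)] by (metis act_l_coset someI)

lemma one_fixpts_Delta_id: "P \<subseteq> carrier G \<Longrightarrow> \<one>\<^bsub>A\<^esub> \<in> fixpts A G \<sigma> (Delta (\<lambda>x. x) P)"
  by (auto simp: fixpts_def Delta_def act_def \<sigma>_mult_inv)

lemma fixpts_Delta_mult:
  assumes "P \<subseteq> carrier G" "f ` P \<subseteq> Q" "Q \<subseteq> carrier G" "g ` Q \<subseteq> carrier G"
    and z: "z \<in> fixpts A G \<sigma> (Delta g Q)" and a: "a \<in> fixpts A G \<sigma> (Delta f P)"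
  shows "z \<otimes>\<^bsub>A\<^esub> a \<in> fixpts A G \<sigma> (Delta (g \<circ> f) P)"
proof -
  have zA: "z \<in> carrier A" and aA: "a \<in> carrier A"
    using z a by (simp_all add: fixpts_def)
  have "act A G \<sigma> (g (f x), x) (z \<otimes>\<^bsub>A\<^esub> a) = z \<otimes>\<^bsub>A\<^esub> a" if x: "x \<in> P" for x
  proof -
    have fx: "f x \<in> Q" using x assms(2) by blast
    then have "act A G \<sigma> (g (f x), f x) z = z"
      using z by (auto simp: fixpts_def Delta_def)
    then have "act A G \<sigma> (g (f x), x) (z \<otimes>\<^bsub>A\<^esub> a) = z \<otimes>\<^bsub>A\<^esub> act A G \<sigma> (f x, x) a"
      using act_mult_fixed[of "g (f x)" "f x" x a z] assms(1,3,4) x fx zA aA by blast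
    also have "\<dots> = z \<otimes>\<^bsub>A\<^esub> a"
      using a x by (auto simp: fixpts_def Delta_def)
    finally show ?thesis .
  qed
  then show ?thesis
    using zA aA by (auto simp: fixpts_def Delta_def)
qed

lemma act_Delta_map:
  assumes "P \<subseteq> carrier G" "f ` P \<subseteq> carrier G" "z \<in> fixpts A G \<sigma> (Delta f P)"
    and "c \<in> Delta (\<lambda>x. x) P" "a \<in> carrier A"
  shows "z \<otimes>\<^bsub>A\<^esub> act A G \<sigma> c a = act A G \<sigma> (Delta_map f c) (z \<otimes>\<^bsub>A\<^esub> a)"
proof -
  obtain x where x: "x \<in> P" and c: "c = (x, x)"
    using assms(4) by (auto simp: Delta_def)
  have "act A G \<sigma> (f x, x) z = z"
    using assms(3) x by (auto simp: fixpts_def Delta_def)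
  moreover have "x \<in> carrier G" "f x \<in> carrier G" "z \<in> carrier A"
    using assms(1,2) x fixpts_closed[OF assms(3)] by auto
  ultimately show ?thesis
    using act_mult_fixed[of "f x" x x a z] assms(5) by (simp add: c Delta_map_def)
qed

lemma fixpts_image_Delta_map_mult:
  assumes "P \<subseteq> carrier G" "f ` P \<subseteq> carrier G" "z \<in> fixpts A G \<sigma> (Delta f P)"
    and "V \<subseteq> Delta (\<lambda>x. x) P" "a \<in> fixpts A G \<sigma> V"
  shows "z \<otimes>\<^bsub>A\<^esub> a \<in> fixpts A G \<sigma> (Delta_map f ` V)"
proof -
  have "act A G \<sigma> (Delta_map f c) (z \<otimes>\<^bsub>A\<^esub> a) = z \<otimes>\<^bsub>A\<^esub> a" if "c \<in> V" for c
  proof -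
    have "act A G \<sigma> (Delta_map f c) (z \<otimes>\<^bsub>A\<^esub> a) = z \<otimes>\<^bsub>A\<^esub> act A G \<sigma> c a"
      using act_Delta_map[OF assms(1-3), of c a] assms(4) that fixpts_closed[OF assms(5)] by auto
    also have "\<dots> = z \<otimes>\<^bsub>A\<^esub> a"
      using assms(5) that by (simp add: fixpts_def)
    finally show ?thesis .
  qed
  then show ?thesis
    using fixpts_closed[OF assms(3)] fixpts_closed[OF assms(5)] by (auto simp: fixpts_def)
qed

lemma subgroup_image_Delta_map:
  assumes "P \<subseteq> carrier G" "f \<in> hom (G\<lparr>carrier := P\<rparr>) G"
    and "subgroup V (G \<times>\<times> G)" "V \<subseteq> Delta (\<lambda>x. x) P"
  shows "subgroup (Delta_map f ` V) (G \<times>\<times> G)"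
proof -
  have "group_hom ((G \<times>\<times> G)\<lparr>carrier := V\<rparr>) (G \<times>\<times> G) (Delta_map f)"
    using Delta_map_hom[OF assms(1,2,4)] subgroup.subgroup_is_group[OF assms(3) GG.is_group]
    by (simp add: group_hom_def group_hom_axioms_def GG.is_group)
  then show ?thesis
    using group_hom.img_is_subgroup by fastforce
qed

lemma trace_closed:
  assumes "D \<subseteq> carrier (G \<times>\<times> G)" "subgroup V (G \<times>\<times> G)" "a \<in> fixpts A G \<sigma> V"
  shows "trace A G \<sigma> D V a \<in> carrier A"
proof -
  have "act A G \<sigma> (SOME c. c \<in> l_coset (G \<times>\<times> G) g V) a \<in> carrier A" if "g \<in> D" for g
  proof -
    have "g \<in> carrier (G \<times>\<times> G)" using assms(1) that by blast
    then show ?thesis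
      using act_some_l_coset[OF assms(2,3)] fixpts_closed[OF assms(3)] by (simp del: carrier_DirProd)
  qed
  then show ?thesis
    unfolding trace_def by (intro A.finsum_closed Pi_I) (elim CollectE exE conjE, simp)
qed

lemma act_some_image_Delta_map_l_coset:
  assumes PG: "P \<subseteq> carrier G" and f: "f \<in> hom (G\<lparr>carrier := P\<rparr>) G"
    and z: "z \<in> fixpts A G \<sigma> (Delta f P)"
    and V: "subgroup V (G \<times>\<times> G)" "V \<subseteq> Delta (\<lambda>x. x) P" and a: "a \<in> fixpts A G \<sigma> V"
    and g: "g \<in> Delta (\<lambda>x. x) P"
  shows "act A G \<sigma> (SOME c. c \<in> Delta_map f ` l_coset (G \<times>\<times> G) g V) (z \<otimes>\<^bsub>A\<^esub> a)
       = z \<otimes>\<^bsub>A\<^esub> act A G \<sigma> g a"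
proof -
  have fP: "f ` P \<subseteq> carrier G" using f by (auto simp: hom_def)
  have hom: "Delta_map f \<in> hom ((G \<times>\<times> G)\<lparr>carrier := Delta (\<lambda>x. x) P\<rparr>) (G \<times>\<times> G)"
    using PG f by (rule Delta_map_hom) simp
  have "Delta_map f ` l_coset (G \<times>\<times> G) g V = l_coset (G \<times>\<times> G) (Delta_map f g) (Delta_map f ` V)"
    using hom g V(2) by (rule image_l_coset)
  moreover have "subgroup (Delta_map f ` V) (G \<times>\<times> G)"
    using PG f V by (rule subgroup_image_Delta_map)
  moreover have "z \<otimes>\<^bsub>A\<^esub> a \<in> fixpts A G \<sigma> (Delta_map f ` V)"
    using PG fP z V(2) a by (rule fixpts_image_Delta_map_mult)
  moreover have "Delta_map f g \<in> carrier (G \<times>\<times> G)"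
    using hom_in_carrier[OF hom] g by simp
  ultimately have "act A G \<sigma> (SOME c. c \<in> Delta_map f ` l_coset (G \<times>\<times> G) g V) (z \<otimes>\<^bsub>A\<^esub> a)
      = act A G \<sigma> (Delta_map f g) (z \<otimes>\<^bsub>A\<^esub> a)"
    using act_some_l_coset by simp
  also have "\<dots> = z \<otimes>\<^bsub>A\<^esub> act A G \<sigma> g a"
    using act_Delta_map[OF PG fP z g] fixpts_closed[OF a] by simp
  finally show ?thesis .
qed

lemma trace_mult_left:
  assumes P: "subgroup P G" "finite P" and f: "f \<in> hom (G\<lparr>carrier := P\<rparr>) G"
    and z: "z \<in> fixpts A G \<sigma> (Delta f P)"
    and V: "subgroup V (G \<times>\<times> G)" "V \<subseteq> Delta (\<lambda>x. x) P" and a: "a \<in> fixpts A G \<sigma> V"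
  shows "z \<otimes>\<^bsub>A\<^esub> trace A G \<sigma> (Delta (\<lambda>x. x) P) V a
       = trace A G \<sigma> (Delta f P) (Delta_map f ` V) (z \<otimes>\<^bsub>A\<^esub> a)"
proof -
  define D where "D = Delta (\<lambda>x. x) P"
  define Cs where "Cs = {l_coset (G \<times>\<times> G) g V | g. g \<in> D}"
  have PG: "P \<subseteq> carrier G" using P(1) by (rule subgroup.subset)
  have aA: "a \<in> carrier A" and zA: "z \<in> carrier A"
    using a z by (simp_all add: fixpts_def)
  have D_carrier: "D \<subseteq> carrier (G \<times>\<times> G)"
    using PG by (auto simp: D_def Delta_def)
  have "Cs = (\<lambda>g. l_coset (G \<times>\<times> G) g V) ` D"
    by (auto simp: Cs_def)
  then have Cs_finite: "finite Cs"
    using P(2) by (simp add: D_def Delta_eq_image)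
  have act_D: "act A G \<sigma> g a \<in> carrier A" if "g \<in> D" for g
    using that D_carrier aA by (simp del: carrier_DirProd add: subsetD)
  have rep: "act A G \<sigma> (SOME c. c \<in> l_coset (G \<times>\<times> G) g V) a = act A G \<sigma> g a" if "g \<in> D" for g
    using act_some_l_coset[OF V(1) a] that D_carrier by blast
  have rep_image: "act A G \<sigma> (SOME c. c \<in> Delta_map f ` l_coset (G \<times>\<times> G) g V) (z \<otimes>\<^bsub>A\<^esub> a)
      = z \<otimes>\<^bsub>A\<^esub> act A G \<sigma> g a" if "g \<in> D" for g
    using act_some_image_Delta_map_l_coset[OF PG f z V a] that by (simp add: D_def)
  have "z \<otimes>\<^bsub>A\<^esub> trace A G \<sigma> D V a = finsum A (\<lambda>C. z \<otimes>\<^bsub>A\<^esub> act A G \<sigma> (SOME c. c \<in> C) a) Cs"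
    unfolding trace_def Cs_def[symmetric] using Cs_finite zA rep act_D
    by (intro A.finsum_rdistr) (auto simp: Cs_def)
  also have "\<dots> = finsum A (\<lambda>C. act A G \<sigma> (SOME c. c \<in> Delta_map f ` C) (z \<otimes>\<^bsub>A\<^esub> a)) Cs"
    using rep rep_image act_D zA by (intro A.finsum_cong') (auto simp: Cs_def)
  also have "\<dots> = finsum A (\<lambda>C. act A G \<sigma> (SOME c. c \<in> C) (z \<otimes>\<^bsub>A\<^esub> a))
      ((\<lambda>C. Delta_map f ` C) ` Cs)"
    using rep_image act_D zA inj_on_image_Delta_map_l_cosets[OF group P(1) V(2)]
    by (intro A.finsum_reindex[symmetric]) (auto simp: Cs_def D_def)
  also have "\<dots> = trace A G \<sigma> (Delta f P) (Delta_map f ` V) (z \<otimes>\<^bsub>A\<^esub> a)"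
    unfolding trace_def Cs_def D_def l_cosets_image_Delta_map[OF PG f V(2)] ..
  finally show ?thesis by (simp add: D_def)
qed

lemma trace_mult_left_in_brker:
  assumes P: "subgroup P G" "finite P" and f: "f \<in> hom (G\<lparr>carrier := P\<rparr>) G"
    and z: "z \<in> fixpts A G \<sigma> (Delta f P)"
    and V: "subgroup V (G \<times>\<times> G)" "V \<subset> Delta (\<lambda>x. x) P" and a: "a \<in> fixpts A G \<sigma> V"
  shows "z \<otimes>\<^bsub>A\<^esub> trace A G \<sigma> (Delta (\<lambda>x. x) P) V a \<in> brker m A alg G \<sigma> (Delta f P)"
proof -
  have PG: "P \<subseteq> carrier G" using P(1) by (rule subgroup.subset)
  have fP: "f ` P \<subseteq> carrier G" using f by (auto simp: hom_def)
  have V_sub: "V \<subseteq> Delta (\<lambda>x. x) P" using V(2) by blast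
  have "subgroup (Delta_map f ` V) (G \<times>\<times> G)"
    using PG f V(1) V_sub by (rule subgroup_image_Delta_map)
  moreover have "Delta_map f ` V \<subset> Delta f P"
    using V(2) by (rule image_Delta_map_psubset)
  moreover have "z \<otimes>\<^bsub>A\<^esub> a \<in> fixpts A G \<sigma> (Delta_map f ` V)"
    using PG fP z V_sub a by (rule fixpts_image_Delta_map_mult)
  ultimately have
    "trace A G \<sigma> (Delta f P) (Delta_map f ` V) (z \<otimes>\<^bsub>A\<^esub> a) \<in> brker m A alg G \<sigma> (Delta f P)"
    by (rule brker.trgen)
  then show ?thesis
    by (simp add: trace_mult_left[OF P f z V(1) V_sub a])
qed

lemma twisted_unit_if_one_factors:
  assumes "inj_on \<phi> P"
    and "x \<in> fixpts A G \<sigma> (Delta (inv_into P \<phi>) Q)" "y \<in> fixpts A G \<sigma> (Delta \<phi> P)"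
    and "\<one>\<^bsub>A\<^esub> \<ominus>\<^bsub>A\<^esub> x \<otimes>\<^bsub>A\<^esub> y \<in> brker m A alg G \<sigma> (Delta (inv_into P \<phi> \<circ> \<phi>) P)"
  shows "twisted_unit m A alg G \<sigma> P Q \<phi> y"
proof -
  have "Delta (inv_into P \<phi> \<circ> \<phi>) P = Delta (\<lambda>x. x) P"
    using assms(1) by (intro Delta_cong) simp
  moreover have "\<ominus>\<^bsub>A\<^esub> (\<one>\<^bsub>A\<^esub> \<ominus>\<^bsub>A\<^esub> x \<otimes>\<^bsub>A\<^esub> y) = x \<otimes>\<^bsub>A\<^esub> y \<ominus>\<^bsub>A\<^esub> \<one>\<^bsub>A\<^esub>"
    using fixpts_closed[OF assms(2)] fixpts_closed[OF assms(3)]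
    by (simp add: a_minus_def A.minus_add A.a_comm)
  ultimately have "x \<otimes>\<^bsub>A\<^esub> y \<ominus>\<^bsub>A\<^esub> \<one>\<^bsub>A\<^esub> \<in> brker m A alg G \<sigma> (Delta (\<lambda>x. x) P)"
    using brker.neg[OF assms(4)] by simp
  then show ?thesis
    using assms(2,3) unfolding twisted_unit_def by blast
qed

end

section \<open>Brauer kernels\<close>

locale brauer_setting = interior_action +
  fixes m :: "'o set" and alg :: "'o \<Rightarrow> 'a"
  assumes alg_closed: "c \<in> m \<Longrightarrow> alg c \<in> carrier A"
    and alg_central: "c \<in> m \<Longrightarrow> a \<in> carrier A \<Longrightarrow> alg c \<otimes>\<^bsub>A\<^esub> a = a \<otimes>\<^bsub>A\<^esub> alg c"
begin

lemma brker_closed: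
  assumes "D \<subseteq> carrier (G \<times>\<times> G)" "x \<in> brker m A alg G \<sigma> D"
  shows "x \<in> carrier A"
  using assms(2)
proof induction
  case (mgen c a)
  then show ?case using alg_closed fixpts_closed[OF mgen(2)] by simp
next
  case (trgen V a)
  then show ?case using trace_closed[OF assms(1)] by blast
qed simp_all

lemma brker_mult_left:
  assumes P: "subgroup P G" "finite P" and f: "f \<in> hom (G\<lparr>carrier := P\<rparr>) G"
    and z: "z \<in> fixpts A G \<sigma> (Delta f P)"
    and x: "x \<in> brker m A alg G \<sigma> (Delta (\<lambda>x. x) P)"
  shows "z \<otimes>\<^bsub>A\<^esub> x \<in> brker m A alg G \<sigma> (Delta f P)"
proof -
  have PG: "P \<subseteq> carrier G" using P(1) by (rule subgroup.subset)
  have fP: "f ` P \<subseteq> carrier G" using f by (auto simp: hom_def)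
  have zA: "z \<in> carrier A" using z by (rule fixpts_closed)
  have D_carrier: "Delta (\<lambda>x. x) P \<subseteq> carrier (G \<times>\<times> G)" using PG by (auto simp: Delta_def)
  show ?thesis
    using x
  proof induction
    case zero
    show ?case using zA brker.zero by simp
  next
    case (mgen c a)
    have "z \<otimes>\<^bsub>A\<^esub> (alg c \<otimes>\<^bsub>A\<^esub> a) = alg c \<otimes>\<^bsub>A\<^esub> (z \<otimes>\<^bsub>A\<^esub> a)"
      using alg_closed[OF mgen(1)] alg_central[OF mgen(1) zA] zA fixpts_closed[OF mgen(2)]
      by (simp flip: A.m_assoc)
    moreover have "z \<otimes>\<^bsub>A\<^esub> a \<in> fixpts A G \<sigma> (Delta f P)"
      using fixpts_image_Delta_map_mult[OF PG fP z subset_refl mgen(2)]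
      by (simp add: image_Delta_map_Delta)
    ultimately show ?case using brker.mgen[OF mgen(1)] by simp
  next
    case (trgen V a)
    then show ?case
      by (rule trace_mult_left_in_brker[OF P f z])
  next
    case (add x y)
    then have "x \<in> carrier A" "y \<in> carrier A"
      using brker_closed[OF D_carrier] by blast+
    then show ?case using brker.add[OF add.IH] zA by (simp add: A.r_distr)
  next
    case (neg x)
    then have "x \<in> carrier A"
      using brker_closed[OF D_carrier] by blast
    then show ?case using brker.neg[OF neg.IH] zA by (simp add: A.r_minus)
  qed
qed

lemma factor_through_twisted_unit:
  assumes P: "subgroup P G" "finite P" and Q: "\<phi> ` P = Q" "Q \<subseteq> carrier G"
    and \<psi>\<phi>: "\<psi> \<circ> \<phi> \<in> hom (G\<lparr>carrier := P\<rparr>) G"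
    and u: "twisted_unit m A alg G \<sigma> P Q \<phi> u"
    and z: "z \<in> fixpts A G \<sigma> (Delta (\<psi> \<circ> \<phi>) P)"
  shows "\<exists>x \<in> fixpts A G \<sigma> (Delta \<psi> Q).
           z \<ominus>\<^bsub>A\<^esub> x \<otimes>\<^bsub>A\<^esub> u \<in> brker m A alg G \<sigma> (Delta (\<psi> \<circ> \<phi>) P)"
proof -
  obtain u' where u': "u' \<in> fixpts A G \<sigma> (Delta (inv_into P \<phi>) Q)"
    and inverse: "u' \<otimes>\<^bsub>A\<^esub> u \<ominus>\<^bsub>A\<^esub> \<one>\<^bsub>A\<^esub> \<in> brker m A alg G \<sigma> (Delta (\<lambda>x. x) P)"
    and uA: "u \<in> carrier A"
    using u by (auto simp: twisted_unit_def fixpts_def)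
  have PG: "P \<subseteq> carrier G" using P(1) by (rule subgroup.subset)
  have "z \<otimes>\<^bsub>A\<^esub> u' \<in> fixpts A G \<sigma> (Delta ((\<psi> \<circ> \<phi>) \<circ> inv_into P \<phi>) Q)"
    using Q PG \<psi>\<phi> z u' by (intro fixpts_Delta_mult) (auto simp: inv_into_into hom_def)
  moreover have "Delta ((\<psi> \<circ> \<phi>) \<circ> inv_into P \<phi>) Q = Delta \<psi> Q"
    using Q(1) by (intro Delta_cong) (auto simp: f_inv_into_f)
  ultimately have x: "z \<otimes>\<^bsub>A\<^esub> u' \<in> fixpts A G \<sigma> (Delta \<psi> Q)"
    by simp
  have "z \<otimes>\<^bsub>A\<^esub> (u' \<otimes>\<^bsub>A\<^esub> u \<ominus>\<^bsub>A\<^esub> \<one>\<^bsub>A\<^esub>) \<in> brker m A alg G \<sigma> (Delta (\<psi> \<circ> \<phi>) P)"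
    using P \<psi>\<phi> z inverse by (rule brker_mult_left)
  moreover have "\<ominus>\<^bsub>A\<^esub> (z \<otimes>\<^bsub>A\<^esub> (u' \<otimes>\<^bsub>A\<^esub> u \<ominus>\<^bsub>A\<^esub> \<one>\<^bsub>A\<^esub>))
      = z \<ominus>\<^bsub>A\<^esub> (z \<otimes>\<^bsub>A\<^esub> u') \<otimes>\<^bsub>A\<^esub> u"
    using fixpts_closed[OF z] fixpts_closed[OF u'] uA
    by (simp add: a_minus_def A.r_distr A.r_minus A.minus_add A.a_comm A.m_assoc)
  ultimately have "z \<ominus>\<^bsub>A\<^esub> (z \<otimes>\<^bsub>A\<^esub> u') \<otimes>\<^bsub>A\<^esub> u \<in> brker m A alg G \<sigma> (Delta (\<psi> \<circ> \<phi>) P)"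
    using brker.neg by metis
  then show ?thesis
    using x by blast
qed

end

section \<open>Twisted units and products in Brauer quotients\<close>

lemma F_hom_cong:
  assumes "F_hom m A alg G \<sigma> P Q \<phi>" "\<And>x. x \<in> P \<Longrightarrow> \<phi>' x = \<phi> x"
  shows "F_hom m A alg G \<sigma> P Q \<phi>'"
proof -
  have P: "subgroup P G" and \<phi>: "\<phi> \<in> hom (G\<lparr>carrier := P\<rparr>) (G\<lparr>carrier := Q\<rparr>)"
    using assms(1) by (simp_all add: F_hom_def)
  then have "\<phi>' \<in> hom (G\<lparr>carrier := P\<rparr>) (G\<lparr>carrier := Q\<rparr>)"
    using assms(2) subgroup.m_closed[OF P] unfolding hom_def by (simp add: Pi_def)
  moreover have "inj_on \<phi>' P = inj_on \<phi> P"
    using assms(2) by (rule inj_on_cong)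
  moreover have "Delta \<phi>' P = Delta \<phi> P"
    using assms(2) by (rule Delta_cong)
  ultimately show ?thesis
    using assms(1) by (simp add: F_hom_def brauer_nonzero_def)
qed

lemma F_iso_image:
  assumes "F_iso m A alg G \<sigma> P Q \<phi>"
  shows "\<phi> ` P = Q"
proof -
  obtain \<chi> where "F_hom m A alg G \<sigma> P Q \<phi>" "F_hom m A alg G \<sigma> Q P \<chi>" "\<forall>y\<in>Q. \<phi> (\<chi> y) = y"
    using assms by (auto simp: F_iso_def)
  then show ?thesis
    by (auto simp: F_hom_def hom_def Pi_def image_iff) metis
qed

lemma F_iso_inv_into:
  assumes "F_iso m A alg G \<sigma> P Q \<phi>"
  shows "F_iso m A alg G \<sigma> Q P (inv_into P \<phi>)"
proof -
  obtain \<chi> where \<phi>: "F_hom m A alg G \<sigma> P Q \<phi>" and \<chi>: "F_hom m A alg G \<sigma> Q P \<chi>"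
    and \<phi>\<chi>: "\<forall>y\<in>Q. \<phi> (\<chi> y) = y"
    using assms by (auto simp: F_iso_def)
  have "inv_into P \<phi> y = \<chi> y" if "y \<in> Q" for y
    using \<phi> \<chi> \<phi>\<chi> that by (intro inv_into_f_eq) (auto simp: F_hom_def hom_def)
  then have "F_hom m A alg G \<sigma> Q P (inv_into P \<phi>)"
    using \<chi> by (rule F_hom_cong[rotated])
  moreover have "inj_on \<phi> P" using \<phi> by (simp add: F_hom_def)
  ultimately show ?thesis
    using \<phi> F_iso_image[OF assms] by (auto simp: F_iso_def f_inv_into_f)
qed

lemma F_hom_comp_hom:
  assumes "F_hom m A alg G \<sigma> P Q \<phi>" "F_hom m A alg G \<sigma> Q T \<psi>"
  shows "\<psi> \<circ> \<phi> \<in> hom (G\<lparr>carrier := P\<rparr>) G"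
proof -
  have "\<phi> \<in> hom (G\<lparr>carrier := P\<rparr>) (G\<lparr>carrier := Q\<rparr>)" "\<psi> \<in> hom (G\<lparr>carrier := Q\<rparr>) (G\<lparr>carrier := T\<rparr>)"
    using assms by (simp_all add: F_hom_def)
  then have "\<psi> \<circ> \<phi> \<in> hom (G\<lparr>carrier := P\<rparr>) (G\<lparr>carrier := T\<rparr>)"
    by (auto simp: hom_def Pi_def)
  moreover have "T \<subseteq> carrier G"
    using assms(2) by (simp add: F_hom_def subgroup.subset)
  ultimately show ?thesis
    by (auto simp: hom_def)
qed

definition brauer_mult_surjective :: "'o set \<Rightarrow> ('a, 'd) ring_scheme \<Rightarrow> ('o \<Rightarrow> 'a)
   \<Rightarrow> ('g, 'c) monoid_scheme \<Rightarrow> ('g \<Rightarrow> 'a) \<Rightarrow> bool" where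
  "brauer_mult_surjective m A alg G \<sigma> \<longleftrightarrow>
    (\<forall>P Q T \<phi> \<psi>. F_iso m A alg G \<sigma> P Q \<phi> \<and> F_iso m A alg G \<sigma> Q T \<psi> \<longrightarrow>
       (\<forall>z \<in> fixpts A G \<sigma> (Delta (\<psi> \<circ> \<phi>) P).
          \<exists>x \<in> fixpts A G \<sigma> (Delta \<psi> Q). \<exists>y \<in> fixpts A G \<sigma> (Delta \<phi> P).
            z \<ominus>\<^bsub>A\<^esub> (x \<otimes>\<^bsub>A\<^esub> y) \<in> brker m A alg G \<sigma> (Delta (\<psi> \<circ> \<phi>) P)))"

lemma (in brauer_setting) brauer_mult_surjective_if_all_twisted_units:
  assumes "finite (carrier G)" "all_twisted_units m A alg G \<sigma>"
  shows "brauer_mult_surjective m A alg G \<sigma>"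
  unfolding brauer_mult_surjective_def
proof (intro allI impI ballI, elim conjE)
  fix P Q T \<phi> \<psi> z
  assume \<phi>: "F_iso m A alg G \<sigma> P Q \<phi>" and \<psi>: "F_iso m A alg G \<sigma> Q T \<psi>"
    and z: "z \<in> fixpts A G \<sigma> (Delta (\<psi> \<circ> \<phi>) P)"
  obtain u where u: "twisted_unit m A alg G \<sigma> P Q \<phi> u"
    using assms(2) \<phi> unfolding all_twisted_units_def by blast
  have P: "subgroup P G" and Q: "subgroup Q G"
    using \<phi> by (simp_all add: F_iso_def F_hom_def)
  have "finite P"
    using assms(1) subgroup.subset[OF P] by (rule finite_subset[rotated])
  moreover have "\<psi> \<circ> \<phi> \<in> hom (G\<lparr>carrier := P\<rparr>) G"
    using \<phi> \<psi> unfolding F_iso_def by (blast intro: F_hom_comp_hom)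
  ultimately obtain x where "x \<in> fixpts A G \<sigma> (Delta \<psi> Q)"
    "z \<ominus>\<^bsub>A\<^esub> x \<otimes>\<^bsub>A\<^esub> u \<in> brker m A alg G \<sigma> (Delta (\<psi> \<circ> \<phi>) P)"
    using factor_through_twisted_unit[OF P _ F_iso_image[OF \<phi>] subgroup.subset[OF Q] _ u z]
    by blast
  moreover have "u \<in> fixpts A G \<sigma> (Delta \<phi> P)"
    using u by (simp add: twisted_unit_def)
  ultimately show "\<exists>x \<in> fixpts A G \<sigma> (Delta \<psi> Q). \<exists>y \<in> fixpts A G \<sigma> (Delta \<phi> P).
      z \<ominus>\<^bsub>A\<^esub> (x \<otimes>\<^bsub>A\<^esub> y) \<in> brker m A alg G \<sigma> (Delta (\<psi> \<circ> \<phi>) P)"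
    by blast
qed

lemma (in interior_action) all_twisted_units_if_brauer_mult_surjective:
  assumes "brauer_mult_surjective m A alg G \<sigma>"
  shows "all_twisted_units m A alg G \<sigma>"
  unfolding all_twisted_units_def
proof (intro allI impI)
  fix P Q \<phi>
  assume \<phi>: "F_iso m A alg G \<sigma> P Q \<phi>"
  have inj: "inj_on \<phi> P" and P: "subgroup P G"
    using \<phi> by (simp_all add: F_iso_def F_hom_def)
  have "Delta (inv_into P \<phi> \<circ> \<phi>) P = Delta (\<lambda>x. x) P"
    using inj by (intro Delta_cong) simp
  then have "\<one>\<^bsub>A\<^esub> \<in> fixpts A G \<sigma> (Delta (inv_into P \<phi> \<circ> \<phi>) P)"
    using one_fixpts_Delta_id[OF subgroup.subset[OF P]] by simp
  then obtain x y where "x \<in> fixpts A G \<sigma> (Delta (inv_into P \<phi>) Q)" "y \<in> fixpts A G \<sigma> (Delta \<phi> P)"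
    "\<one>\<^bsub>A\<^esub> \<ominus>\<^bsub>A\<^esub> x \<otimes>\<^bsub>A\<^esub> y \<in> brker m A alg G \<sigma> (Delta (inv_into P \<phi> \<circ> \<phi>) P)"
    using assms \<phi> F_iso_inv_into[OF \<phi>] unfolding brauer_mult_surjective_def by blast
  then show "\<exists>u. twisted_unit m A alg G \<sigma> P Q \<phi> u"
    using twisted_unit_if_one_factors[OF inj] by blast
qed

lemma brauer_setting_if_interior_algebra:
  assumes "interior_algebra R A alg G \<sigma>" "m \<subseteq> carrier R"
  shows "brauer_setting A G \<sigma> m alg"
  using assms ring_hom_closed
  by (fastforce simp: interior_algebra_def brauer_setting_def brauer_setting_axioms_def
      interior_action_def)

theorem proposition5p2:
  fixes R :: "('o, 'b) ring_scheme" and m :: "'o set" and p :: nat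
    and A :: "('a, 'd) ring_scheme" and alg :: "'o \<Rightarrow> 'a"
    and G :: "('g, 'c) monoid_scheme" and \<sigma> :: "'g \<Rightarrow> 'a"
  assumes "standing_ring R m p"
    and "p_group G p"
    and "divisible R m A alg G \<sigma>"
  shows "all_twisted_units m A alg G \<sigma> \<longleftrightarrow>
    (\<forall>P Q T \<phi> \<psi>. F_iso m A alg G \<sigma> P Q \<phi> \<and> F_iso m A alg G \<sigma> Q T \<psi> \<longrightarrow>
       (\<forall>z \<in> fixpts A G \<sigma> (Delta (\<psi> \<circ> \<phi>) P).
          \<exists>x \<in> fixpts A G \<sigma> (Delta \<psi> Q). \<exists>y \<in> fixpts A G \<sigma> (Delta \<phi> P).
            z \<ominus>\<^bsub>A\<^esub> (x \<otimes>\<^bsub>A\<^esub> y) \<in> brker m A alg G \<sigma> (Delta (\<psi> \<circ> \<phi>) P)))"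
proof -
  have "maximalideal m R"
    using assms(1) by (simp add: standing_ring_def)
  then have "m \<subseteq> carrier R"
    by (intro additive_subgroup.a_subset ideal.axioms(1) maximalideal.axioms(1))
  moreover have "interior_algebra R A alg G \<sigma>"
    using assms(3) by (simp add: divisible_def bifree_def)
  ultimately interpret brauer_setting A G \<sigma> m alg
    by (intro brauer_setting_if_interior_algebra)
  have "finite (carrier G)"
    using assms(2) by (simp add: p_group_def)
  then show ?thesis
    unfolding brauer_mult_surjective_def[symmetric]
    using brauer_mult_surjective_if_all_twisted_units all_twisted_units_if_brauer_mult_surjective
    by blast
qed

end
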